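(* Let $\mathcal{X}$ be an input space, let $X$ be a random input in $\mathcal{X}$ with label $Y\in\{0,1\}$, and let $S\in[0,1]$ be a random confidence score such that, conditionally on $X=x$, $S$ has density $f_{S\mid X}(s\mid x)=\sum_{k=1}^K \mathbf{1}[\gamma(x)=k]\,u_k(s)=u_{\gamma(x)}(s)$, where $u_1,\dots,u_K$ are fixed probability distributions (densities) on $[0,1]$ and $\gamma:\mathcal{X}\to\{1,\dots,K\}$ is a fixed map, and such that $S$ and $Y$ are conditionally independent given $X$. Let $(x_1,y_1),\dots,(x_N,y_N)$ be i.i.d. copies of $(X,Y)$. Let $I_1,\dots,I_M$ be intervals partitioning $[0,1]$, and fix $m$ with $P(S\in I_m)>0$. Define $$\hat r_m=\frac{\sum_{n=1}^N P(S\in I_m\mid X=x_n)\,y_n}{\sum_{n=1}^N P(S\in I_m\mid X=x_n)},\qquad \hat g_m=\frac{\sum_{n=1}^N \mathbb{E}[S\,\mathbf{1}[S\in I_m]\mid X=x_n]}{\sum_{n=1}^N P(S\in I_m\mid X=x_n)},\qquad \hat p_m=\frac{1}{N}\sum_{n=1}^N P(S\in I_m\mid X=x_n).$$ Then, as $N\to\infty$, $\hat r_m$, $\hat g_m$ and $\hat p_m$ are consistent estimators (converge in probability) of $\mathbb{E}[Y\mid S\in I_m]$, $\mathbb{E}[S\mid S\in I_m]$ and $P(S\in I_m)$, respectively.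
   Context: The classifier outputs, for each input $x$, a confidence distribution $u_{\gamma(x)}$ over $[0,1]$ (one of $K$ distributions associated with certainty phrases) rather than a single score; $S$ denotes a score drawn from this distribution. The quantities $P(S\in I_m\mid X=x_n)=\int_{I_m} u_{\gamma(x_n)}(s)\,ds$ and $\mathbb{E}[S\,\mathbf{1}[S\in I_m]\mid X=x_n]=\int_{I_m} s\,u_{\gamma(x_n)}(s)\,ds$ are computed from the known distribution $u_{\gamma(x_n)}$. *)

theory Defs
  imports "HOL-Probability.Probability"
begin

text \<open>P(S \<in> A | X = x) when gamma x = k, i.e. the integral of the k-th distribution over A.\<close>
definition bin_prob :: "(nat \<Rightarrow> real \<Rightarrow> real) \<Rightarrow> real set \<Rightarrow> nat \<Rightarrow> real" where
  "bin_prob u A k = (LINT s:A|lborel. u k s)"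

text \<open>E[S 1[S \<in> A] | X = x] when gamma x = k.\<close>
definition bin_mom :: "(nat \<Rightarrow> real \<Rightarrow> real) \<Rightarrow> real set \<Rightarrow> nat \<Rightarrow> real" where
  "bin_mom u A k = (LINT s:A|lborel. s * u k s)"

definition r_hat :: "(nat \<Rightarrow> real \<Rightarrow> real) \<Rightarrow> ('x \<Rightarrow> nat) \<Rightarrow> real set
    \<Rightarrow> (nat \<Rightarrow> 'a \<Rightarrow> 'x) \<Rightarrow> (nat \<Rightarrow> 'a \<Rightarrow> real) \<Rightarrow> nat \<Rightarrow> 'a \<Rightarrow> real" where
  "r_hat u \<gamma> A Xs Ys N \<omega> =
     (\<Sum>n<N. bin_prob u A (\<gamma> (Xs n \<omega>)) * Ys n \<omega>) / (\<Sum>n<N. bin_prob u A (\<gamma> (Xs n \<omega>)))"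

definition g_hat :: "(nat \<Rightarrow> real \<Rightarrow> real) \<Rightarrow> ('x \<Rightarrow> nat) \<Rightarrow> real set
    \<Rightarrow> (nat \<Rightarrow> 'a \<Rightarrow> 'x) \<Rightarrow> nat \<Rightarrow> 'a \<Rightarrow> real" where
  "g_hat u \<gamma> A Xs N \<omega> =
     (\<Sum>n<N. bin_mom u A (\<gamma> (Xs n \<omega>))) / (\<Sum>n<N. bin_prob u A (\<gamma> (Xs n \<omega>)))"

definition p_hat :: "(nat \<Rightarrow> real \<Rightarrow> real) \<Rightarrow> ('x \<Rightarrow> nat) \<Rightarrow> real set
    \<Rightarrow> (nat \<Rightarrow> 'a \<Rightarrow> 'x) \<Rightarrow> nat \<Rightarrow> 'a \<Rightarrow> real" where
  "p_hat u \<gamma> A Xs N \<omega> = (\<Sum>n<N. bin_prob u A (\<gamma> (Xs n \<omega>))) / real N"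

definition cond_exp_event :: "'a measure \<Rightarrow> ('a \<Rightarrow> real) \<Rightarrow> 'a set \<Rightarrow> real" where
  "cond_exp_event M f B = (\<integral>\<omega>. f \<omega> * indicator B \<omega> \<partial>M) / measure M B"

definition conv_in_prob :: "'a measure \<Rightarrow> (nat \<Rightarrow> 'a \<Rightarrow> real) \<Rightarrow> real \<Rightarrow> bool" where
  "conv_in_prob M Z c \<longleftrightarrow>
     (\<forall>e>0. (\<lambda>N. measure M {\<omega> \<in> space M. e < \<bar>Z N \<omega> - c\<bar>}) \<longlonglongrightarrow> 0)"

end

theory Submission
  imports Defs
begin

text \<open>
  Each estimator is a ratio of sample means of bounded functions of the i.i.d. pairs
  \<open>(x\<^sub>n, y\<^sub>n)\<close>: by Hoeffding's inequality these sample means converge in probability to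
  their expectations, and convergence in probability passes to quotients with nonzero limiting
  denominator. The limits are identified through the joint law: conditionally on \<open>\<gamma> X = k\<close>
  the score has density \<open>u\<^sub>k\<close> and is independent of the label, so
  \<open>E[P(S \<in> I\<^sub>m | X)] = P(S \<in> I\<^sub>m)\<close>, \<open>E[P(S \<in> I\<^sub>m | X) Y] = E[Y 1[S \<in> I\<^sub>m]]\<close> and
  \<open>E[E[S 1[S \<in> I\<^sub>m] | X]] = E[S 1[S \<in> I\<^sub>m]]\<close>.
\<close>

lemma (in prob_space) conv_in_prob_mean_iid_bounded:
  fixes Z :: "nat \<Rightarrow> 'a \<Rightarrow> real" and Z0 :: "'a \<Rightarrow> real"
  assumes indep: "indep_vars (\<lambda>_. borel) Z UNIV"
    and ident: "\<And>n. distr M borel (Z n) = distr M borel Z0"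
    and Z0[measurable]: "random_variable borel Z0"
    and bounded: "AE \<omega> in M. Z0 \<omega> \<in> {a..b}"
  shows "conv_in_prob M (\<lambda>N \<omega>. (\<Sum>n<N. Z n \<omega>) / real N) (expectation Z0)"
  unfolding conv_in_prob_def
proof (intro allI impI)
  fix e :: real assume "e > 0"
  define c where "c = 2 * e\<^sup>2 / (b + 1 - a)\<^sup>2"
  have "AE \<omega> in M. a \<le> b"
    using bounded by eventually_elim auto
  then have "a \<le> b" by simp
  then have c: "c > 0"
    using \<open>e > 0\<close> by (simp add: c_def)
  have bound: "measure M {\<omega> \<in> space M. e < \<bar>(\<Sum>n<N. Z n \<omega>) / real N - expectation Z0\<bar>}
      \<le> 2 * exp (- c * real N)" if "N > 0" for N
  proof -
    \<comment> \<open>the library's Hoeffding bound requires \<open>a < b\<close>, hence the widened interval\<close>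
    interpret Hoeffding_ineq_iid M "{..<N}" Z Z0 a "b + 1" "expectation Z0"
    proof unfold_locales
      show "indep_vars (\<lambda>_. borel) Z {..<N}"
        by (rule indep_vars_subset[OF indep]) auto
      show "AE \<omega> in M. Z0 \<omega> \<in> {a..b + 1}"
        using bounded by eventually_elim auto
    qed (simp_all add: ident)
    have "measure M {\<omega> \<in> space M. e < \<bar>(\<Sum>n<N. Z n \<omega>) / real N - expectation Z0\<bar>}
        \<le> measure M {\<omega> \<in> space M. e \<le> \<bar>(\<Sum>n<N. Z n \<omega>) / real N - expectation Z0\<bar>}"
      by (intro finite_measure_mono) auto
    also have "\<dots> \<le> 2 * exp (- 2 * real N * e\<^sup>2 / (b + 1 - a)\<^sup>2)"
      using Hoeffding_ineq_abs_ge'[of e] \<open>e > 0\<close> \<open>a \<le> b\<close> \<open>N > 0\<close> by auto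
    finally show ?thesis by (simp add: c_def mult_ac)
  qed
  have "(\<lambda>N. 2 * exp (- c) ^ N) \<longlonglongrightarrow> 0"
    using c by (intro tendsto_mult_right_zero LIMSEQ_power_zero) auto
  then have lim: "(\<lambda>N. 2 * exp (- c * real N)) \<longlonglongrightarrow> 0"
    by (simp add: exp_of_nat_mult[symmetric] mult.commute)
  show "(\<lambda>N. measure M {\<omega> \<in> space M. e < \<bar>(\<Sum>n<N. Z n \<omega>) / real N - expectation Z0\<bar>}) \<longlonglongrightarrow> 0"
    by (rule tendsto_sandwich[OF _ eventually_mono[OF eventually_gt_at_top bound] tendsto_const lim])
      simp
qed

lemma (in prob_space) conv_in_prob_mean_comp_iid_bounded:
  fixes Z :: "nat \<Rightarrow> 'a \<Rightarrow> 'b" and Z0 :: "'a \<Rightarrow> 'b" and f :: "'b \<Rightarrow> real"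
  assumes indep: "indep_vars (\<lambda>_. N) Z UNIV"
    and ident: "\<And>n. distr M N (Z n) = distr M N Z0"
    and Z0[measurable]: "Z0 \<in> measurable M N"
    and f[measurable]: "f \<in> borel_measurable N"
    and bounded: "\<And>\<omega>. \<omega> \<in> space M \<Longrightarrow> \<bar>f (Z0 \<omega>)\<bar> \<le> B"
  shows "conv_in_prob M (\<lambda>n \<omega>. (\<Sum>i<n. f (Z i \<omega>)) / real n) (expectation (\<lambda>\<omega>. f (Z0 \<omega>)))"
proof (rule conv_in_prob_mean_iid_bounded[where a="-B" and b=B])
  show "indep_vars (\<lambda>_. borel) (\<lambda>n \<omega>. f (Z n \<omega>)) UNIV"
    by (rule indep_vars_compose2[OF indep]) simp
  have Z[measurable]: "Z n \<in> measurable M N" for n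
    using indep unfolding indep_vars_def by simp
  show "distr M borel (\<lambda>\<omega>. f (Z n \<omega>)) = distr M borel (\<lambda>\<omega>. f (Z0 \<omega>))" for n
    using distr_distr[of f N borel "Z n" M] distr_distr[of f N borel Z0 M]
    by (simp add: ident comp_def)
  show "AE \<omega> in M. f (Z0 \<omega>) \<in> {-B..B}"
    using bounded by (intro AE_I2) (metis abs_le_iff atLeastAtMost_iff minus_le_iff)
qed simp

lemma (in prob_space) conv_in_prob_compose2:
  fixes \<phi> :: "real \<Rightarrow> real \<Rightarrow> real"
  assumes A: "conv_in_prob M A a" and B: "conv_in_prob M B b"
    and cont: "isCont (\<lambda>p. \<phi> (fst p) (snd p)) (a, b)"
    and [measurable]: "\<And>N. A N \<in> borel_measurable M" "\<And>N. B N \<in> borel_measurable M"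
    and [measurable]: "case_prod \<phi> \<in> borel_measurable (borel \<Otimes>\<^sub>M borel)"
  shows "conv_in_prob M (\<lambda>N \<omega>. \<phi> (A N \<omega>) (B N \<omega>)) (\<phi> a b)"
  unfolding conv_in_prob_def
proof (intro allI impI)
  fix e :: real assume "e > 0"
  with cont obtain s where "s > 0"
    and s: "\<And>p. dist p (a, b) < s \<Longrightarrow> dist (\<phi> (fst p) (snd p)) (\<phi> a b) < e"
    unfolding continuous_at_eps_delta by (metis fst_conv snd_conv)
  define d where "d = s / 3"
  have "d > 0"
    using \<open>s > 0\<close> by (simp add: d_def)
  have close: "\<bar>\<phi> x y - \<phi> a b\<bar> < e" if "\<bar>x - a\<bar> \<le> d" "\<bar>y - b\<bar> \<le> d" for x y
  proof -
    have "dist (x, y) (a, b) \<le> \<bar>x - a\<bar> + \<bar>y - b\<bar>"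
      unfolding dist_Pair_Pair dist_real_def by (simp add: sqrt_sum_squares_le_sum_abs)
    also have "\<dots> < s"
      using that \<open>s > 0\<close> by (simp add: d_def)
    finally show ?thesis
      using s[of "(x, y)"] by (simp add: dist_real_def)
  qed
  have bound: "measure M {\<omega> \<in> space M. e < \<bar>\<phi> (A N \<omega>) (B N \<omega>) - \<phi> a b\<bar>}
      \<le> measure M {\<omega> \<in> space M. d < \<bar>A N \<omega> - a\<bar>} + measure M {\<omega> \<in> space M. d < \<bar>B N \<omega> - b\<bar>}" for N
  proof -
    have "{\<omega> \<in> space M. e < \<bar>\<phi> (A N \<omega>) (B N \<omega>) - \<phi> a b\<bar>}
        \<subseteq> {\<omega> \<in> space M. d < \<bar>A N \<omega> - a\<bar>} \<union> {\<omega> \<in> space M. d < \<bar>B N \<omega> - b\<bar>}"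
    proof safe
      fix \<omega> assume "e < \<bar>\<phi> (A N \<omega>) (B N \<omega>) - \<phi> a b\<bar>" "\<not> d < \<bar>B N \<omega> - b\<bar>"
      then show "d < \<bar>A N \<omega> - a\<bar>"
        using close[of "A N \<omega>" "B N \<omega>"] by linarith
    qed
    then have "measure M {\<omega> \<in> space M. e < \<bar>\<phi> (A N \<omega>) (B N \<omega>) - \<phi> a b\<bar>}
        \<le> measure M ({\<omega> \<in> space M. d < \<bar>A N \<omega> - a\<bar>} \<union> {\<omega> \<in> space M. d < \<bar>B N \<omega> - b\<bar>})"
      by (intro finite_measure_mono) measurable
    also have "\<dots> \<le> measure M {\<omega> \<in> space M. d < \<bar>A N \<omega> - a\<bar>} + measure M {\<omega> \<in> space M. d < \<bar>B N \<omega> - b\<bar>}"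
      by (intro measure_Un_le) measurable
    finally show ?thesis .
  qed
  have lim: "(\<lambda>N. measure M {\<omega> \<in> space M. d < \<bar>A N \<omega> - a\<bar>} + measure M {\<omega> \<in> space M. d < \<bar>B N \<omega> - b\<bar>})
      \<longlonglongrightarrow> 0 + 0"
    using A B \<open>d > 0\<close> unfolding conv_in_prob_def by (intro tendsto_add) auto
  show "(\<lambda>N. measure M {\<omega> \<in> space M. e < \<bar>\<phi> (A N \<omega>) (B N \<omega>) - \<phi> a b\<bar>}) \<longlonglongrightarrow> 0"
    by (rule tendsto_sandwich[OF always_eventually always_eventually tendsto_const lim[simplified]])
      (simp_all add: bound)
qed

lemma (in prob_space) conv_in_prob_divide:
  assumes "conv_in_prob M A a" and "conv_in_prob M B b" and "b \<noteq> 0"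
    and [measurable]: "\<And>N. A N \<in> borel_measurable M" "\<And>N. B N \<in> borel_measurable M"
  shows "conv_in_prob M (\<lambda>N \<omega>. A N \<omega> / B N \<omega>) (a / b)"
  using assms by (intro conv_in_prob_compose2[where \<phi>="(/)"]) (auto intro!: continuous_intros, measurable)

lemma (in prob_space) conv_in_prob_ratio_of_sums:
  assumes "conv_in_prob M (\<lambda>N \<omega>. (\<Sum>n<N. A n \<omega>) / real N) a"
    and "conv_in_prob M (\<lambda>N \<omega>. (\<Sum>n<N. B n \<omega>) / real N) b" and "b \<noteq> 0"
    and [measurable]: "\<And>n. A n \<in> borel_measurable M" "\<And>n. B n \<in> borel_measurable M"
  shows "conv_in_prob M (\<lambda>N \<omega>. (\<Sum>n<N. A n \<omega>) / (\<Sum>n<N. B n \<omega>)) (a / b)"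
proof -
  have eq: "(\<lambda>N \<omega>. (\<Sum>n<N. A n \<omega>) / (\<Sum>n<N. B n \<omega>))
      = (\<lambda>N \<omega>. ((\<Sum>n<N. A n \<omega>) / real N) / ((\<Sum>n<N. B n \<omega>) / real N))"
    \<comment> \<open>at \<open>N = 0\<close> both sides are \<open>0\<close>, as \<open>x / 0 = 0\<close>\<close>
    by (auto simp: fun_eq_iff)
  show ?thesis
    unfolding eq by (rule conv_in_prob_divide[OF assms(1-3)]) measurable
qed

lemma set_integrable_zero_outside_imp_integrable:
  fixes f :: "'a \<Rightarrow> real"
  assumes "set_integrable M A f" and "\<And>x. x \<notin> A \<Longrightarrow> f x = 0"
  shows "integrable M f"
proof -
  have "(\<lambda>x. indicator A x *\<^sub>R f x) = f"
    using assms(2) by (auto simp: fun_eq_iff indicator_def)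
  then show ?thesis
    using assms(1) by (simp add: set_integrable_def)
qed

lemma (in prob_space) distr_restricted_eq_density:
  fixes S :: "'a \<Rightarrow> real" and u :: "real \<Rightarrow> real"
  assumes S[measurable]: "random_variable borel S" and F[measurable]: "F \<in> events"
    and u[measurable]: "u \<in> borel_measurable borel" and u_nonneg: "\<And>s. 0 \<le> u s"
    and u_int: "integrable lborel u"
    and law: "\<And>C. C \<in> sets borel \<Longrightarrow> prob {\<omega> \<in> F. S \<omega> \<in> C} = prob F * (LINT s:C|lborel. u s)"
  shows "distr (density M (indicator F)) borel S = density lborel (\<lambda>s. prob F * u s)"
proof (rule measure_eqI)
  fix C assume "C \<in> sets (distr (density M (indicator F)) borel S)"
  then have C[measurable]: "C \<in> sets borel" by simp
  have "emeasure (distr (density M (indicator F)) borel S) C = emeasure M {\<omega> \<in> F. S \<omega> \<in> C}"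
    using sets.sets_into_space[OF F]
    by (subst emeasure_distr, simp_all, subst emeasure_restricted)
       (auto intro!: arg_cong[where f="emeasure M"])
  also have "\<dots> = ennreal (prob F * (LINT s:C|lborel. u s))"
    using sets.sets_into_space[OF F] by (simp add: emeasure_eq_measure law)
  also have "\<dots> = emeasure (density lborel (\<lambda>s. prob F * u s)) C"
  proof -
    have int: "integrable lborel (\<lambda>s. prob F * (indicator C s * u s))"
      using integrable_real_mult_indicator[of C lborel u] u_int by (simp add: mult.commute)
    have "emeasure (density lborel (\<lambda>s. prob F * u s)) C
        = (\<integral>\<^sup>+s. ennreal (prob F * (indicator C s * u s)) \<partial>lborel)"
      by (subst emeasure_density) (auto intro!: nn_integral_cong simp: indicator_def)
    also have "\<dots> = ennreal (\<integral>s. prob F * (indicator C s * u s) \<partial>lborel)"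
      using u_nonneg by (intro nn_integral_eq_integral int) auto
    also have "(\<integral>s. prob F * (indicator C s * u s) \<partial>lborel) = prob F * (LINT s:C|lborel. u s)"
      by (simp add: set_lebesgue_integral_def)
    finally show ?thesis by simp
  qed
  finally show "emeasure (distr (density M (indicator F)) borel S) C
      = emeasure (density lborel (\<lambda>s. prob F * u s)) C" .
qed simp

lemma (in prob_space) integral_indicator_comp_eq_density:
  fixes S :: "'a \<Rightarrow> real" and u g :: "real \<Rightarrow> real"
  assumes S[measurable]: "random_variable borel S" and F[measurable]: "F \<in> events"
    and u[measurable]: "u \<in> borel_measurable borel" and u_nonneg: "\<And>s. 0 \<le> u s"
    and u_int: "integrable lborel u"
    and law: "\<And>C. C \<in> sets borel \<Longrightarrow> prob {\<omega> \<in> F. S \<omega> \<in> C} = prob F * (LINT s:C|lborel. u s)"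
    and g[measurable]: "g \<in> borel_measurable borel"
  shows "(\<integral>\<omega>. indicator F \<omega> * g (S \<omega>) \<partial>M) = prob F * (LBINT s. u s * g s)"
proof -
  have "density M (indicator F) = density M (\<lambda>\<omega>. ennreal (indicator F \<omega>))"
    by (simp add: ennreal_indicator)
  then have "(\<integral>\<omega>. indicator F \<omega> * g (S \<omega>) \<partial>M) = (\<integral>s. g s \<partial>distr (density M (indicator F)) borel S)"
    by (subst integral_distr) (simp_all add: integral_density)
  also have "\<dots> = (LBINT s. (prob F * u s) * g s)"
    using u_nonneg by (simp add: distr_restricted_eq_density[OF assms(1-6)] integral_density)
  finally show ?thesis
    by (simp add: mult.assoc)
qed

lemma (in prob_space) integral_comp_eq_mixture:
  fixes G :: "'a \<Rightarrow> nat" and S :: "'a \<Rightarrow> real" and u :: "nat \<Rightarrow> real \<Rightarrow> real" and g :: "real \<Rightarrow> real"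
  assumes G[measurable]: "G \<in> measurable M (count_space UNIV)"
    and G_range: "\<And>\<omega>. \<omega> \<in> space M \<Longrightarrow> G \<omega> \<in> Ks" and "finite Ks"
    and S[measurable]: "random_variable borel S"
    and u_meas: "\<And>k. k \<in> Ks \<Longrightarrow> u k \<in> borel_measurable borel"
    and u_nonneg: "\<And>k s. k \<in> Ks \<Longrightarrow> 0 \<le> u k s"
    and u_int: "\<And>k. k \<in> Ks \<Longrightarrow> integrable lborel (u k)"
    and law: "\<And>k C. k \<in> Ks \<Longrightarrow> C \<in> sets borel \<Longrightarrow>
      prob {\<omega> \<in> space M. G \<omega> = k \<and> S \<omega> \<in> C} = prob {\<omega> \<in> space M. G \<omega> = k} * (LINT s:C|lborel. u k s)"
    and g[measurable]: "g \<in> borel_measurable borel" and g_int: "integrable M (\<lambda>\<omega>. g (S \<omega>))"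
  shows "expectation (\<lambda>\<omega>. g (S \<omega>)) = expectation (\<lambda>\<omega>. LBINT s. u (G \<omega>) s * g s)"
proof -
  define F where "F k = {\<omega> \<in> space M. G \<omega> = k}" for k
  have F[measurable]: "F k \<in> events" for k
    unfolding F_def by measurable
  have partition: "(\<Sum>k\<in>Ks. indicator (F k) \<omega> * c k) = c (G \<omega>)" if "\<omega> \<in> space M"
    for \<omega> and c :: "nat \<Rightarrow> real"
    using that G_range[OF that] \<open>finite Ks\<close>
    by (simp add: F_def indicator_def if_distrib sum.delta cong: sum.cong)
  have "expectation (\<lambda>\<omega>. g (S \<omega>)) = expectation (\<lambda>\<omega>. \<Sum>k\<in>Ks. indicator (F k) \<omega> * g (S \<omega>))"
    by (rule Bochner_Integration.integral_cong[OF refl]) (use partition[of _ "\<lambda>_. g (S _)"] in simp)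
  also have "\<dots> = (\<Sum>k\<in>Ks. expectation (\<lambda>\<omega>. indicator (F k) \<omega> * g (S \<omega>)))"
    using integrable_real_mult_indicator[OF F g_int]
    by (intro Bochner_Integration.integral_sum) (simp add: mult.commute)
  also have "\<dots> = (\<Sum>k\<in>Ks. prob (F k) * (LBINT s. u k s * g s))"
  proof (intro sum.cong refl integral_indicator_comp_eq_density)
    fix k and C :: "real set" assume "k \<in> Ks" "C \<in> sets borel"
    moreover have "{\<omega> \<in> F k. S \<omega> \<in> C} = {\<omega> \<in> space M. G \<omega> = k \<and> S \<omega> \<in> C}"
      by (auto simp: F_def)
    ultimately show "prob {\<omega> \<in> F k. S \<omega> \<in> C} = prob (F k) * (LINT s:C|lborel. u k s)"
      by (simp add: law F_def)
  qed (use u_meas u_nonneg u_int in auto)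
  also have "\<dots> = expectation (\<lambda>\<omega>. \<Sum>k\<in>Ks. indicator (F k) \<omega> * (LBINT s. u k s * g s))"
    by (subst Bochner_Integration.integral_sum) (auto simp: less_top[symmetric] intro!: integrable_real_indicator)
  also have "\<dots> = expectation (\<lambda>\<omega>. LBINT s. u (G \<omega>) s * g s)"
    by (rule Bochner_Integration.integral_cong[OF refl]) (rule partition)
  finally show ?thesis .
qed

text \<open>
  The model of the paper: conditionally on \<open>X\<close>, the score \<open>S\<close> has density \<open>u (\<gamma> X)\<close> and is
  independent of the label \<open>Y\<close>.
\<close>

definition score_law :: "'a measure \<Rightarrow> 'x measure \<Rightarrow> ('a \<Rightarrow> 'x) \<Rightarrow> ('a \<Rightarrow> real) \<Rightarrow> ('a \<Rightarrow> real)
    \<Rightarrow> (nat \<Rightarrow> real \<Rightarrow> real) \<Rightarrow> ('x \<Rightarrow> nat) \<Rightarrow> bool" where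
  "score_law M Mx X Y S u \<gamma> \<longleftrightarrow>
    (\<forall>A\<in>sets Mx. \<forall>B\<in>sets (borel :: real measure). \<forall>C\<in>sets (borel :: real measure).
      measure M {\<omega> \<in> space M. X \<omega> \<in> A \<and> Y \<omega> \<in> B \<and> S \<omega> \<in> C}
      = (\<integral>\<omega>. indicator A (X \<omega>) * indicator B (Y \<omega>) * (LINT s:C|lborel. u (\<gamma> (X \<omega>)) s) \<partial>M))"

lemma (in prob_space) prob_class_and_bin:
  fixes X :: "'a \<Rightarrow> 'x" and Y S :: "'a \<Rightarrow> real"
  assumes X[measurable]: "X \<in> measurable M Mx" and \<gamma>[measurable]: "\<gamma> \<in> measurable Mx (count_space UNIV)"
    and joint_law: "score_law M Mx X Y S u \<gamma>"
    and C: "C \<in> sets borel"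
  shows "prob {\<omega> \<in> space M. \<gamma> (X \<omega>) = k \<and> S \<omega> \<in> C} = prob {\<omega> \<in> space M. \<gamma> (X \<omega>) = k} * bin_prob u C k"
proof -
  define A where "A = {x \<in> space Mx. \<gamma> x = k}"
  have "A \<in> sets Mx"
    unfolding A_def by measurable
  have "{\<omega> \<in> space M. \<gamma> (X \<omega>) = k \<and> S \<omega> \<in> C} = {\<omega> \<in> space M. X \<omega> \<in> A \<and> Y \<omega> \<in> UNIV \<and> S \<omega> \<in> C}"
    using measurable_space[OF X] by (auto simp: A_def)
  also have "prob \<dots> = expectation (\<lambda>\<omega>. indicator A (X \<omega>) * indicator UNIV (Y \<omega>) * (LINT s:C|lborel. u (\<gamma> (X \<omega>)) s))"
    using joint_law[unfolded score_law_def, rule_format, of A UNIV C] \<open>A \<in> sets Mx\<close> C by simp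
  also have "\<dots> = expectation (\<lambda>\<omega>. indicator {\<omega> \<in> space M. \<gamma> (X \<omega>) = k} \<omega> * bin_prob u C k)"
    using measurable_space[OF X]
    by (intro Bochner_Integration.integral_cong) (auto simp: A_def bin_prob_def indicator_def)
  finally show ?thesis
    by simp
qed

lemma (in prob_space) prob_label_and_bin:
  fixes X :: "'a \<Rightarrow> 'x" and Y S :: "'a \<Rightarrow> real"
  assumes X: "X \<in> measurable M Mx"
    and joint_law: "score_law M Mx X Y S u \<gamma>"
    and B: "B \<in> sets borel" and C: "C \<in> sets borel"
  shows "prob {\<omega> \<in> space M. Y \<omega> \<in> B \<and> S \<omega> \<in> C}
      = expectation (\<lambda>\<omega>. indicator B (Y \<omega>) * bin_prob u C (\<gamma> (X \<omega>)))"
proof -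
  have "{\<omega> \<in> space M. Y \<omega> \<in> B \<and> S \<omega> \<in> C} = {\<omega> \<in> space M. X \<omega> \<in> space Mx \<and> Y \<omega> \<in> B \<and> S \<omega> \<in> C}"
    using measurable_space[OF X] by auto
  also have "prob \<dots> = expectation (\<lambda>\<omega>. indicator (space Mx) (X \<omega>) * indicator B (Y \<omega>) * (LINT s:C|lborel. u (\<gamma> (X \<omega>)) s))"
    using joint_law[unfolded score_law_def, rule_format, of "space Mx" B C] B C by simp
  also have "\<dots> = expectation (\<lambda>\<omega>. indicator B (Y \<omega>) * bin_prob u C (\<gamma> (X \<omega>)))"
    using measurable_space[OF X] by (intro Bochner_Integration.integral_cong) (auto simp: bin_prob_def)
  finally show ?thesis .
qed

lemma (in prob_space) expectation_label_in_bin: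
  fixes X :: "'a \<Rightarrow> 'x" and Y S :: "'a \<Rightarrow> real"
  assumes X: "X \<in> measurable M Mx"
    and [measurable]: "Y \<in> borel_measurable M" "S \<in> borel_measurable M"
    and Y_01: "\<forall>\<omega>\<in>space M. Y \<omega> \<in> {0, 1}"
    and joint_law: "score_law M Mx X Y S u \<gamma>"
    and C[measurable]: "C \<in> sets borel"
  shows "expectation (\<lambda>\<omega>. Y \<omega> * indicator {\<omega> \<in> space M. S \<omega> \<in> C} \<omega>)
      = expectation (\<lambda>\<omega>. bin_prob u C (\<gamma> (X \<omega>)) * Y \<omega>)"
proof -
  have "expectation (\<lambda>\<omega>. Y \<omega> * indicator {\<omega> \<in> space M. S \<omega> \<in> C} \<omega>)
      = expectation (indicator {\<omega> \<in> space M. Y \<omega> \<in> {1} \<and> S \<omega> \<in> C})"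
    using Y_01 by (intro Bochner_Integration.integral_cong) (auto simp: indicator_def)
  also have "\<dots> = expectation (\<lambda>\<omega>. indicator {1} (Y \<omega>) * bin_prob u C (\<gamma> (X \<omega>)))"
    using prob_label_and_bin[OF X joint_law, of "{1}" C] by simp
  also have "\<dots> = expectation (\<lambda>\<omega>. bin_prob u C (\<gamma> (X \<omega>)) * Y \<omega>)"
    using Y_01 by (intro Bochner_Integration.integral_cong) (auto simp: indicator_def)
  finally show ?thesis .
qed

lemma (in prob_space) expectation_score_in_bin:
  fixes X :: "'a \<Rightarrow> 'x" and Y S :: "'a \<Rightarrow> real"
  assumes X[measurable]: "X \<in> measurable M Mx" and S[measurable]: "S \<in> borel_measurable M"
    and \<gamma>[measurable]: "\<gamma> \<in> measurable Mx (count_space UNIV)"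
    and \<gamma>_range: "\<forall>x\<in>space Mx. \<gamma> x \<in> {1..K}"
    and u_meas: "\<forall>k\<in>{1..K}. u k \<in> borel_measurable lborel"
    and u_nonneg: "\<forall>k\<in>{1..K}. \<forall>s. 0 \<le> u k s"
    and u_int: "\<forall>k\<in>{1..K}. integrable lborel (u k)"
    and joint_law: "score_law M Mx X Y S u \<gamma>"
    and J[measurable]: "J \<in> sets borel" and J_unit: "J \<subseteq> {0..1}"
  shows "expectation (\<lambda>\<omega>. S \<omega> * indicator {\<omega> \<in> space M. S \<omega> \<in> J} \<omega>)
      = expectation (\<lambda>\<omega>. bin_mom u J (\<gamma> (X \<omega>)))"
proof -
  have "expectation (\<lambda>\<omega>. S \<omega> * indicator J (S \<omega>))
      = expectation (\<lambda>\<omega>. LBINT s. u (\<gamma> (X \<omega>)) s * (s * indicator J s))"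
  proof (rule integral_comp_eq_mixture[where Ks="{1..K}"])
    show "integrable M (\<lambda>\<omega>. S \<omega> * indicator J (S \<omega>))"
      using J_unit by (intro integrable_const_bound[where B=1] AE_I2) (auto simp: indicator_def)
  qed (use \<gamma>_range measurable_space[OF X] u_meas u_nonneg u_int
         prob_class_and_bin[OF X \<gamma> joint_law] in \<open>auto simp: bin_prob_def\<close>)
  moreover have "(LBINT s. u k s * (s * indicator J s)) = bin_mom u J k" for k
    by (simp add: bin_mom_def set_lebesgue_integral_def mult_ac)
  moreover have "expectation (\<lambda>\<omega>. S \<omega> * indicator {\<omega> \<in> space M. S \<omega> \<in> J} \<omega>)
      = expectation (\<lambda>\<omega>. S \<omega> * indicator J (S \<omega>))"
    by (intro Bochner_Integration.integral_cong) (auto simp: indicator_def)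
  ultimately show ?thesis
    by simp
qed

lemma (in prob_space) conv_in_prob_class_weighted_mean:
  fixes Xs :: "nat \<Rightarrow> 'a \<Rightarrow> 'x" and Ys :: "nat \<Rightarrow> 'a \<Rightarrow> real" and \<gamma> :: "'x \<Rightarrow> nat"
    and h :: "nat \<Rightarrow> real" and w :: "real \<Rightarrow> real"
  assumes iid_indep: "indep_vars (\<lambda>_. Mx \<Otimes>\<^sub>M borel) (\<lambda>n \<omega>. (Xs n \<omega>, Ys n \<omega>)) UNIV"
    and iid_dist: "\<forall>n. distr M (Mx \<Otimes>\<^sub>M borel) (\<lambda>\<omega>. (Xs n \<omega>, Ys n \<omega>))
        = distr M (Mx \<Otimes>\<^sub>M borel) (\<lambda>\<omega>. (X \<omega>, Y \<omega>))"
    and X[measurable]: "X \<in> measurable M Mx" and Y[measurable]: "Y \<in> borel_measurable M"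
    and [measurable]: "\<gamma> \<in> measurable Mx (count_space UNIV)" "w \<in> borel_measurable borel"
    and \<gamma>_range: "\<forall>x\<in>space Mx. \<gamma> x \<in> Ks" and "finite Ks"
    and w_bounded: "\<forall>\<omega>\<in>space M. \<bar>w (Y \<omega>)\<bar> \<le> 1"
  shows "conv_in_prob M (\<lambda>N \<omega>. (\<Sum>n<N. h (\<gamma> (Xs n \<omega>)) * w (Ys n \<omega>)) / real N)
      (expectation (\<lambda>\<omega>. h (\<gamma> (X \<omega>)) * w (Y \<omega>)))"
proof -
  have meas: "(\<lambda>(x, y). h (\<gamma> x) * w y) \<in> borel_measurable (Mx \<Otimes>\<^sub>M borel)"
    by measurable
  have bounded: "\<bar>h (\<gamma> (X \<omega>)) * w (Y \<omega>)\<bar> \<le> (\<Sum>k\<in>Ks. \<bar>h k\<bar>)" if "\<omega> \<in> space M" for \<omega>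
  proof -
    have "\<bar>h (\<gamma> (X \<omega>))\<bar> \<le> (\<Sum>k\<in>Ks. \<bar>h k\<bar>)"
      using \<gamma>_range measurable_space[OF X that] \<open>finite Ks\<close>
      by (intro member_le_sum[where f="\<lambda>k. \<bar>h k\<bar>"]) auto
    moreover have "\<bar>h (\<gamma> (X \<omega>))\<bar> * \<bar>w (Y \<omega>)\<bar> \<le> \<bar>h (\<gamma> (X \<omega>))\<bar>"
      using w_bounded that by (simp add: mult_left_le)
    ultimately show ?thesis
      by (simp add: abs_mult)
  qed
  show ?thesis
    using conv_in_prob_mean_comp_iid_bounded[OF iid_indep _ measurable_Pair[OF X Y] meas,
        where B="\<Sum>k\<in>Ks. \<bar>h k\<bar>"] iid_dist bounded
    by simp
qed

theorem proposition1:
  fixes M :: "'a measure" and Mx :: "'x measure"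
    and X :: "'a \<Rightarrow> 'x" and Y :: "'a \<Rightarrow> real" and S :: "'a \<Rightarrow> real"
    and K :: nat and u :: "nat \<Rightarrow> real \<Rightarrow> real" and \<gamma> :: "'x \<Rightarrow> nat"
    and Xs :: "nat \<Rightarrow> 'a \<Rightarrow> 'x" and Ys :: "nat \<Rightarrow> 'a \<Rightarrow> real"
    and Mb :: nat and I :: "nat \<Rightarrow> real set" and m :: nat
  assumes "prob_space M"
    and X_meas: "X \<in> measurable M Mx"
    and Y_meas: "Y \<in> borel_measurable M"
    and S_meas: "S \<in> borel_measurable M"
    and Y_01: "\<forall>\<omega>\<in>space M. Y \<omega> \<in> {0, 1}"
    and gamma_range: "\<forall>x\<in>space Mx. \<gamma> x \<in> {1..K}"
    and gamma_meas: "\<gamma> \<in> measurable Mx (count_space UNIV)"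
    and u_meas: "\<forall>k\<in>{1..K}. u k \<in> borel_measurable lborel"
    and u_nonneg: "\<forall>k\<in>{1..K}. \<forall>s. 0 \<le> u k s"
    and u_supp: "\<forall>k\<in>{1..K}. \<forall>s. s \<notin> {0..1} \<longrightarrow> u k s = 0"
    and u_int: "\<forall>k\<in>{1..K}. set_integrable lborel {0..1::real} (u k)"
    and u_norm: "\<forall>k\<in>{1..K}. (LINT s:{0..1}|lborel. u k s) = 1"
    and joint_law: "\<forall>A\<in>sets Mx. \<forall>B\<in>sets (borel :: real measure). \<forall>C\<in>sets (borel :: real measure).
        measure M {\<omega> \<in> space M. X \<omega> \<in> A \<and> Y \<omega> \<in> B \<and> S \<omega> \<in> C}
        = (\<integral>\<omega>. indicator A (X \<omega>) * indicator B (Y \<omega>) * (LINT s:C|lborel. u (\<gamma> (X \<omega>)) s) \<partial>M)"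
    and iid_indep: "prob_space.indep_vars M (\<lambda>_. Mx \<Otimes>\<^sub>M (borel :: real measure))
        (\<lambda>n \<omega>. (Xs n \<omega>, Ys n \<omega>)) UNIV"
    and iid_dist: "\<forall>n. distr M (Mx \<Otimes>\<^sub>M borel) (\<lambda>\<omega>. (Xs n \<omega>, Ys n \<omega>))
        = distr M (Mx \<Otimes>\<^sub>M borel) (\<lambda>\<omega>. (X \<omega>, Y \<omega>))"
    and bins_interval: "\<forall>i\<in>{1..Mb}. is_interval (I i)"
    and bins_disj: "disjoint_family_on I {1..Mb}"
    and bins_cover: "(\<Union>i\<in>{1..Mb}. I i) = {0..1}"
    and m_range: "m \<in> {1..Mb}"
    and m_pos: "measure M {\<omega> \<in> space M. S \<omega> \<in> I m} > 0"
  shows "conv_in_prob M (r_hat u \<gamma> (I m) Xs Ys)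
           (cond_exp_event M Y {\<omega> \<in> space M. S \<omega> \<in> I m})
       \<and> conv_in_prob M (g_hat u \<gamma> (I m) Xs)
           (cond_exp_event M S {\<omega> \<in> space M. S \<omega> \<in> I m})
       \<and> conv_in_prob M (p_hat u \<gamma> (I m) Xs)
           (measure M {\<omega> \<in> space M. S \<omega> \<in> I m})"
proof -
  interpret prob_space M by fact
  note [measurable] = gamma_meas
  have law: "score_law M Mx X Y S u \<gamma>"
    using joint_law by (simp only: score_law_def)
  have "(\<lambda>\<omega>. (Xs n \<omega>, Ys n \<omega>)) \<in> measurable M (Mx \<Otimes>\<^sub>M borel)" for n
    using iid_indep unfolding indep_vars_def by auto
  then have [measurable]: "Xs n \<in> measurable M Mx" "Ys n \<in> borel_measurable M" for n
    by (auto simp: measurable_pair_iff comp_def)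
  have [measurable]: "I m \<in> sets borel"
    using bins_interval m_range by (intro real_interval_borel_measurable) auto
  define E where "E = {\<omega> \<in> space M. S \<omega> \<in> I m}"
  define hp where "hp = bin_prob u (I m)"
  define hm where "hm = bin_mom u (I m)"
  have mean: "conv_in_prob M (\<lambda>N \<omega>. (\<Sum>n<N. h (\<gamma> (Xs n \<omega>)) * w (Ys n \<omega>)) / real N)
      (expectation (\<lambda>\<omega>. h (\<gamma> (X \<omega>)) * w (Y \<omega>)))"
    if "w \<in> borel_measurable borel" "\<forall>\<omega>\<in>space M. \<bar>w (Y \<omega>)\<bar> \<le> 1" for h w
    using conv_in_prob_class_weighted_mean[OF iid_indep iid_dist X_meas Y_meas gamma_meas that(1)
        gamma_range _ that(2)]
    by simp
  have "conv_in_prob M (\<lambda>N \<omega>. (\<Sum>n<N. hp (\<gamma> (Xs n \<omega>))) / real N) (expectation (\<lambda>\<omega>. hp (\<gamma> (X \<omega>))))"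
    and "conv_in_prob M (\<lambda>N \<omega>. (\<Sum>n<N. hp (\<gamma> (Xs n \<omega>)) * Ys n \<omega>) / real N)
      (expectation (\<lambda>\<omega>. hp (\<gamma> (X \<omega>)) * Y \<omega>))"
    and "conv_in_prob M (\<lambda>N \<omega>. (\<Sum>n<N. hm (\<gamma> (Xs n \<omega>))) / real N) (expectation (\<lambda>\<omega>. hm (\<gamma> (X \<omega>))))"
    using mean[of "\<lambda>_. 1" hp] mean[of "\<lambda>y. y" hp] mean[of "\<lambda>_. 1" hm] Y_01 by force+
  moreover have "prob E = expectation (\<lambda>\<omega>. hp (\<gamma> (X \<omega>)))"
    using prob_label_and_bin[OF X_meas law, of UNIV "I m"] by (simp add: E_def hp_def)
  moreover have "expectation (\<lambda>\<omega>. Y \<omega> * indicator E \<omega>) = expectation (\<lambda>\<omega>. hp (\<gamma> (X \<omega>)) * Y \<omega>)"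
    unfolding E_def hp_def by (rule expectation_label_in_bin[OF X_meas Y_meas S_meas Y_01 law]) simp
  moreover have "expectation (\<lambda>\<omega>. S \<omega> * indicator E \<omega>) = expectation (\<lambda>\<omega>. hm (\<gamma> (X \<omega>)))"
    unfolding E_def hm_def using u_int u_supp bins_cover m_range
    by (intro expectation_score_in_bin[OF X_meas S_meas gamma_meas gamma_range u_meas u_nonneg _ law])
      (auto intro: set_integrable_zero_outside_imp_integrable)
  moreover have "prob E \<noteq> 0"
    using m_pos by (simp add: E_def)
  ultimately have "conv_in_prob M (r_hat u \<gamma> (I m) Xs Ys) (cond_exp_event M Y E)"
    and "conv_in_prob M (g_hat u \<gamma> (I m) Xs) (cond_exp_event M S E)"
    and "conv_in_prob M (p_hat u \<gamma> (I m) Xs) (prob E)"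
    unfolding r_hat_def g_hat_def p_hat_def cond_exp_event_def hp_def[symmetric] hm_def[symmetric]
    by (auto intro!: conv_in_prob_ratio_of_sums)
  then show ?thesis
    by (simp add: E_def)
qed

end
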